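(* Let $d\geq1$, $T\geq2$, and let $x^0,x^1\in(\mathbb{R}^d)^T$ satisfy $x^0_{t,j}\neq x^1_{t,j}$ for all $t,j$. For $1\le t\le T$ let $\mathcal{E}_t:=(\{0,1\}^d)^t$ and for $\vec\varepsilon_t=(\varepsilon_{s,j})_{s\le t,\,j\le d}\in\mathcal{E}_t$ let $x^{\vec\varepsilon_t}:=(x^{\varepsilon_{s,j}}_{s,j})_{s\le t,\,j\le d}$; let $D:=\{x^{\vec\varepsilon_T}:\vec\varepsilon_T\in\mathcal{E}_T\}$. Consider the real variables $u_{t,j}(\vec\varepsilon_t)$ for $1\le t\le T-1$, $1\le j\le d$, $\vec\varepsilon_t\in\mathcal{E}_t$, together with $w_1^0,w_1^1$ and $w_j^1$ for $2\le j\le d$ (a total of $d\sum_{t=1}^{T-1}2^{dt}+d+1$ variables), and the linear map $L_T$ sending them to the vector indexed by $\vec\varepsilon_T\in\mathcal{E}_T$ with entries $\sum_{t=1}^{T-1}\sum_{j=1}^d u_{t,j}(\vec\varepsilon_t)\,(x^{\varepsilon_{t+1,j}}_{t+1,j}-x^{\varepsilon_{t,j}}_{t,j})+w_1^{\varepsilon_{T,1}}+\sum_{j=2}^d \varepsilon_{T,j}\,w_j^1,$ where $\vec\varepsilon_t$ denotes the truncation of $\vec\varepsilon_T$ to its first $t$ blocks. Then the matrix of $L_T$ (with respect to any ordering of rows and columns) has full column rank, i.e. $L_T$ is injective.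
   Context: This linear map encodes the evaluation on the cuboid $D$ of $V=\sum_{t=1}^{T-1}\sum_{j=1}^d\hat h_{t,j}(x_1,\dots,x_t)(x_{t+1,j}-x_{t,j})+\sum_{j=1}^d\hat g_j(x_{T,j})$ under the normalization $\hat g_j(x^0_{T,j})=0$ for $j\ge2$, with $u_{t,j}(\vec\varepsilon_t)=\hat h_{t,j}(x^{\vec\varepsilon_t})$, $w_1^k=\hat g_1(x^k_{T,1})$, $w^1_j=\hat g_j(x^1_{T,j})$. *)

theory Defs
  imports "HOL-Analysis.Analysis"
begin

text \<open>Indices: times s in {1..T}, coordinates j in {1..d}. A point of (R^d)^T is a
  function nat => nat => real (only the values on {1..T} x {1..d} matter).
  A sign pattern eps in E_t = ({0,1}^d)^t is a function nat => nat => nat with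
  values in {0,1} on {1..t} x {1..d} and value 0 elsewhere (extensional).\<close>

definition Eset :: "nat \<Rightarrow> nat \<Rightarrow> (nat \<Rightarrow> nat \<Rightarrow> nat) set" where
  "Eset d t = {e. (\<forall>s j. e s j \<in> {0,1}) \<and>
                   (\<forall>s j. \<not> (s \<in> {1..t} \<and> j \<in> {1..d}) \<longrightarrow> e s j = 0)}"

definition trunc :: "nat \<Rightarrow> (nat \<Rightarrow> nat \<Rightarrow> nat) \<Rightarrow> (nat \<Rightarrow> nat \<Rightarrow> nat)" where
  "trunc t e = (\<lambda>s j. if s \<le> t then e s j else 0)"

definition xsel :: "(nat \<Rightarrow> nat \<Rightarrow> real) \<Rightarrow> (nat \<Rightarrow> nat \<Rightarrow> real) \<Rightarrow>
                    (nat \<Rightarrow> nat \<Rightarrow> nat) \<Rightarrow> nat \<Rightarrow> nat \<Rightarrow> real" where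
  "xsel x0 x1 e s j = (if e s j = 0 then x0 s j else x1 s j)"

text \<open>The linear map L_T, evaluated at the row indexed by eps in E_T.
  Variables: u t j eps = u_{t,j}(eps); w0 = w_1^0; w1 j = w_j^1 (j = 1..d).\<close>
definition LT :: "nat \<Rightarrow> nat \<Rightarrow> (nat \<Rightarrow> nat \<Rightarrow> real) \<Rightarrow> (nat \<Rightarrow> nat \<Rightarrow> real) \<Rightarrow>
    (nat \<Rightarrow> nat \<Rightarrow> (nat \<Rightarrow> nat \<Rightarrow> nat) \<Rightarrow> real) \<Rightarrow> real \<Rightarrow> (nat \<Rightarrow> real) \<Rightarrow>
    (nat \<Rightarrow> nat \<Rightarrow> nat) \<Rightarrow> real" where
  "LT d T x0 x1 u w0 w1 e =
     (\<Sum>t = 1..T-1. \<Sum>j = 1..d. u t j (trunc t e) *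
         (xsel x0 x1 e (t+1) j - xsel x0 x1 e t j))
     + (if e T 1 = 0 then w0 else w1 1)
     + (\<Sum>j = 2..d. real (e T j) * w1 j)"

end

theory Submission
  imports Defs
begin

text \<open>Since L_T is linear it suffices to show that its kernel is trivial. More generally, if
  sum_{t<T} sum_j u_{t,j} (x_{t+1,j} - x_{t,j}) + sum_j g_j(eps_{T,j}) vanishes on all of D, then
  u = 0 and every g_j is constant; this goes by induction on T. Freeze the first T-1 blocks of
  signs and vary the last one: the value becomes a sum of functions of the individual last signs,
  so each of them is constant. This says u_{T-1,j} (x^1_{T,j} - x^0_{T,j}) = g_j(0) - g_j(1), so
  u_{T-1,j} = c_j does not depend on the past, and the last trading term is absorbed into the
  new terminal functions g_j(0) + c_j (x^0_{T,j} - x_{T-1,j}) of the signs at time T-1. By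
  induction these are constant, i.e. c_j (x^1_{T-1,j} - x^0_{T-1,j}) = 0, whence c_j = 0.\<close>

lemma sum_independent_choices_imp_const:
  fixes \<phi> :: "'a \<Rightarrow> 'b \<Rightarrow> 'c::cancel_comm_monoid_add"
  assumes "finite J"
    and const: "\<And>b. (\<forall>j. b j \<in> A) \<Longrightarrow> (\<Sum>j\<in>J. \<phi> j (b j)) = c"
    and "j \<in> J" "a \<in> A" "a' \<in> A"
  shows "\<phi> j a = \<phi> j a'"
proof -
  have "(\<Sum>k\<in>J-{j}. \<phi> k (if k = j then a else a')) = (\<Sum>k\<in>J-{j}. \<phi> k a')"
    by (rule sum.cong) auto
  then have "\<phi> j a + (\<Sum>k\<in>J-{j}. \<phi> k a') = (\<Sum>k\<in>J. \<phi> k (if k = j then a else a'))"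
    using sum.remove[OF \<open>finite J\<close> \<open>j \<in> J\<close>, of "\<lambda>k. \<phi> k (if k = j then a else a')"] by simp
  also have "\<dots> = (\<Sum>k\<in>J. \<phi> k a')"
    using const[of "\<lambda>k. if k = j then a else a'"] const[of "\<lambda>_. a'"] \<open>a \<in> A\<close> \<open>a' \<in> A\<close> by simp
  also have "\<dots> = \<phi> j a' + (\<Sum>k\<in>J-{j}. \<phi> k a')"
    using sum.remove[OF \<open>finite J\<close> \<open>j \<in> J\<close>] .
  finally show ?thesis by simp
qed

definition gains :: "nat \<Rightarrow> nat \<Rightarrow> (nat \<Rightarrow> nat \<Rightarrow> real) \<Rightarrow> (nat \<Rightarrow> nat \<Rightarrow> real) \<Rightarrow>
    (nat \<Rightarrow> nat \<Rightarrow> (nat \<Rightarrow> nat \<Rightarrow> nat) \<Rightarrow> real) \<Rightarrow> (nat \<Rightarrow> nat \<Rightarrow> nat) \<Rightarrow> real" where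
  "gains d T x0 x1 u e = (\<Sum>t = 1..T-1. \<Sum>j = 1..d. u t j (trunc t e) *
      (xsel x0 x1 e (t+1) j - xsel x0 x1 e t j))"

definition append_block :: "nat \<Rightarrow> nat \<Rightarrow> (nat \<Rightarrow> nat \<Rightarrow> nat) \<Rightarrow> (nat \<Rightarrow> nat) \<Rightarrow>
    (nat \<Rightarrow> nat \<Rightarrow> nat)" where
  "append_block d n f b = (\<lambda>s j. if s \<le> n then f s j else if s = Suc n \<and> j \<in> {1..d} then b j else 0)"

lemma append_block_in_Eset:
  "f \<in> Eset d n \<Longrightarrow> \<forall>j. b j \<in> {0,1} \<Longrightarrow> append_block d n f b \<in> Eset d (Suc n)"
  unfolding Eset_def append_block_def by auto

lemma zero_in_Eset: "(\<lambda>_ _. 0) \<in> Eset d t"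
  unfolding Eset_def by auto

lemma gains_append_block:
  assumes "n \<ge> 1" and "f \<in> Eset d n"
  shows "gains d (Suc n) x0 x1 u (append_block d n f b) = gains d n x0 x1 u f +
    (\<Sum>j = 1..d. u n j f * ((if b j = 0 then x0 (Suc n) j else x1 (Suc n) j) - xsel x0 x1 f n j))"
proof -
  let ?e = "append_block d n f b"
  have trunc_eq: "trunc t ?e = trunc t f" if "t \<le> n" for t
    using that by (auto simp: trunc_def append_block_def fun_eq_iff)
  have xsel_eq: "xsel x0 x1 ?e s j = xsel x0 x1 f s j" if "s \<le> n" for s j
    using that by (simp add: xsel_def append_block_def)
  have "trunc n f = f"
    using \<open>f \<in> Eset d n\<close> by (auto simp: Eset_def trunc_def fun_eq_iff)
  then have last_step:
    "(\<Sum>j = 1..d. u n j (trunc n ?e) * (xsel x0 x1 ?e (Suc n) j - xsel x0 x1 ?e n j)) =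
      (\<Sum>j = 1..d. u n j f * ((if b j = 0 then x0 (Suc n) j else x1 (Suc n) j) - xsel x0 x1 f n j))"
    by (intro sum.cong refl) (simp add: trunc_eq xsel_eq, simp add: xsel_def append_block_def)
  have "gains d n x0 x1 u ?e = gains d n x0 x1 u f"
    unfolding gains_def by (intro sum.cong refl) (auto simp: trunc_eq xsel_eq)
  moreover have "(\<Sum>t = 1..n. F t) = (\<Sum>t = 1..n-1. F t) + F n" for F :: "nat \<Rightarrow> real"
    using \<open>n \<ge> 1\<close> by (cases n) auto
  ultimately show ?thesis
    using last_step by (simp add: gains_def)
qed

lemma vanishing_portfolio_is_trivial:
  assumes "T \<ge> 1"
    and "\<And>t j. t \<in> {1..T} \<Longrightarrow> j \<in> {1..d} \<Longrightarrow> x0 t j \<noteq> x1 t j"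
    and "\<And>e. e \<in> Eset d T \<Longrightarrow> gains d T x0 x1 u e + (\<Sum>j = 1..d. g j (e T j)) = 0"
  shows "(\<forall>t \<in> {1..T-1}. \<forall>j \<in> {1..d}. \<forall>e \<in> Eset d t. u t j e = 0) \<and>
    (\<forall>j \<in> {1..d}. g j 1 = g j 0)"
  using assms
proof (induction T arbitrary: g rule: nat_induct_at_least)
  case base
  have "g j 1 = g j 0" if "j \<in> {1..d}" for j
  proof (rule sum_independent_choices_imp_const
      [where \<phi> = g and J = "{1..d}" and A = "{0,1}" and c = 0])
    fix b :: "nat \<Rightarrow> nat" assume "\<forall>j. b j \<in> {0,1}"
    then have "append_block d 0 (\<lambda>_ _. 0) b \<in> Eset d 1"
      using append_block_in_Eset[OF zero_in_Eset] by simp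
    moreover have "(\<Sum>j = 1..d. g j (append_block d 0 (\<lambda>_ _. 0) b 1 j)) = (\<Sum>j = 1..d. g j (b j))"
      by (intro sum.cong) (auto simp: append_block_def)
    ultimately show "(\<Sum>j = 1..d. g j (b j)) = 0"
      using base.prems(2) by (simp add: gains_def)
  qed (use that in auto)
  then show ?case by simp
next
  case (Suc n)
  let ?x = "\<lambda>b t j. if b = 0 then x0 t j else x1 t j"
  define \<phi> where "\<phi> f j b = u n j f * (?x b (Suc n) j - xsel x0 x1 f n j) + g j b"
    for f j and b :: nat
  have fibre: "(\<Sum>j = 1..d. \<phi> f j (b j)) = - gains d n x0 x1 u f"
    if f: "f \<in> Eset d n" and b: "\<forall>j. b j \<in> {0,1}" for f b
  proof -
    have "(\<Sum>j = 1..d. g j (append_block d n f b (Suc n) j)) = (\<Sum>j = 1..d. g j (b j))"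
      by (intro sum.cong) (auto simp: append_block_def)
    then show ?thesis
      using Suc.prems(2)[OF append_block_in_Eset[OF f b]] gains_append_block[OF Suc.hyps f]
      by (simp add: \<phi>_def sum.distrib)
  qed
  have jump: "u n j f * (x1 (Suc n) j - x0 (Suc n) j) = g j 0 - g j 1"
    if f: "f \<in> Eset d n" and j: "j \<in> {1..d}" for f j
  proof -
    have "\<phi> f j 1 = \<phi> f j 0"
      by (rule sum_independent_choices_imp_const[where J = "{1..d}" and A = "{0,1}"])
        (use fibre[OF f] j in auto)
    then show ?thesis by (simp add: \<phi>_def algebra_simps)
  qed
  have uniform: "u n j f = u n j (\<lambda>_ _. 0)" if f: "f \<in> Eset d n" and j: "j \<in> {1..d}" for f j
  proof -
    have "x1 (Suc n) j - x0 (Suc n) j \<noteq> 0" using Suc.prems(1)[of "Suc n" j] j by auto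
    moreover have "u n j f * (x1 (Suc n) j - x0 (Suc n) j) =
        u n j (\<lambda>_ _. 0) * (x1 (Suc n) j - x0 (Suc n) j)"
      using jump[OF f j] jump[OF zero_in_Eset j] by simp
    ultimately show ?thesis by simp
  qed
  define g' where "g' j b = g j 0 + u n j (\<lambda>_ _. 0) * (x0 (Suc n) j - ?x b n j)"
    for j and b :: nat
  have "gains d n x0 x1 u f + (\<Sum>j = 1..d. g' j (f n j)) = 0" if f: "f \<in> Eset d n" for f
  proof -
    have "(\<Sum>j = 1..d. g' j (f n j)) = (\<Sum>j = 1..d. \<phi> f j 0)"
      by (intro sum.cong) (auto simp: g'_def \<phi>_def xsel_def uniform[OF f] algebra_simps)
    then show ?thesis using fibre[OF f, of "\<lambda>_. 0"] by simp
  qed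
  with Suc.prems(1) have IH: "(\<forall>t \<in> {1..n-1}. \<forall>j \<in> {1..d}. \<forall>e \<in> Eset d t. u t j e = 0) \<and>
      (\<forall>j \<in> {1..d}. g' j 1 = g' j 0)"
    by (intro Suc.IH) auto
  have u_last_zero: "u n j f = 0" if f: "f \<in> Eset d n" and j: "j \<in> {1..d}" for f j
  proof -
    have "g' j 1 = g' j 0" using IH j by blast
    moreover have "x0 n j \<noteq> x1 n j" using Suc.prems(1)[of n j] Suc.hyps j by auto
    ultimately have "u n j (\<lambda>_ _. 0) = 0" by (simp add: g'_def)
    then show ?thesis using uniform[OF f j] by simp
  qed
  have "g j 1 = g j 0" if j: "j \<in> {1..d}" for j
    using jump[OF zero_in_Eset j] u_last_zero[OF zero_in_Eset j] by simp
  moreover have "u t j e = 0" if "t \<in> {1..n}" "j \<in> {1..d}" "e \<in> Eset d t" for t j e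
    using that IH u_last_zero by (cases "t = n") auto
  ultimately show ?case by simp
qed

text \<open>The terminal functions of LT as functions of the sign b, under the normalisation
  g_j(x^0_{T,j}) = 0 for j >= 2: g_1(b) = w_1^b and g_j(b) = b w_j^1.\<close>
definition terminal_payoff :: "real \<Rightarrow> (nat \<Rightarrow> real) \<Rightarrow> nat \<Rightarrow> nat \<Rightarrow> real" where
  "terminal_payoff w0 w1 j b = (if j = 1 then (if b = 0 then w0 else w1 1) else real b * w1 j)"

lemma LT_eq_gains_plus_terminal_payoff:
  assumes "d \<ge> 1"
  shows "LT d T x0 x1 u w0 w1 e =
    gains d T x0 x1 u e + (\<Sum>j = 1..d. terminal_payoff w0 w1 j (e T j))"
proof -
  have "(\<Sum>j = 2..d. terminal_payoff w0 w1 j (e T j)) = (\<Sum>j = 2..d. real (e T j) * w1 j)"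
    by (intro sum.cong) (auto simp: terminal_payoff_def)
  then show ?thesis
    using sum.atLeast_Suc_atMost[OF assms, of "\<lambda>j. terminal_payoff w0 w1 j (e T j)"]
    by (simp add: LT_def gains_def terminal_payoff_def numeral_2_eq_2)
qed

lemma gains_diff:
  "gains d T x0 x1 u e - gains d T x0 x1 u' e = gains d T x0 x1 (\<lambda>t j f. u t j f - u' t j f) e"
  unfolding gains_def by (simp add: sum_subtractf[symmetric] algebra_simps)

lemma terminal_payoff_diff:
  "terminal_payoff w0 w1 j b - terminal_payoff w0' w1' j b =
    terminal_payoff (w0 - w0') (\<lambda>j. w1 j - w1' j) j b"
  by (simp add: terminal_payoff_def algebra_simps)

lemma terminal_payoff_trivial_imp_zero:
  assumes "d \<ge> 1"
    and const: "\<forall>j \<in> {1..d}. terminal_payoff w0 w1 j 1 = terminal_payoff w0 w1 j 0"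
    and "(\<Sum>j = 1..d. terminal_payoff w0 w1 j 0) = 0"
  shows "w0 = 0" and "j \<in> {1..d} \<Longrightarrow> w1 j = 0"
proof -
  show "w0 = 0"
    using assms(3) sum.atLeast_Suc_atMost[OF assms(1), of "\<lambda>j. terminal_payoff w0 w1 j 0"]
    by (simp add: terminal_payoff_def)
  moreover assume "j \<in> {1..d}"
  then have "terminal_payoff w0 w1 j 1 = terminal_payoff w0 w1 j 0"
    using const by blast
  ultimately show "w1 j = 0"
    by (cases "j = 1") (simp_all add: terminal_payoff_def)
qed

theorem lemma4p1:
  fixes d T :: nat and x0 x1 :: "nat \<Rightarrow> nat \<Rightarrow> real"
    and u u' :: "nat \<Rightarrow> nat \<Rightarrow> (nat \<Rightarrow> nat \<Rightarrow> nat) \<Rightarrow> real"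
    and w0 w0' :: real and w1 w1' :: "nat \<Rightarrow> real"
  assumes "d \<ge> 1" and "T \<ge> 2"
    and "\<And>t j. t \<in> {1..T} \<Longrightarrow> j \<in> {1..d} \<Longrightarrow> x0 t j \<noteq> x1 t j"
    and "\<And>e. e \<in> Eset d T \<Longrightarrow> LT d T x0 x1 u w0 w1 e = LT d T x0 x1 u' w0' w1' e"
  shows "(\<forall>t \<in> {1..T-1}. \<forall>j \<in> {1..d}. \<forall>e \<in> Eset d t. u t j e = u' t j e)
         \<and> w0 = w0' \<and> (\<forall>j \<in> {1..d}. w1 j = w1' j)"
proof -
  define U where "U = (\<lambda>t j f. u t j f - u' t j f)"
  define g where "g = terminal_payoff (w0 - w0') (\<lambda>j. w1 j - w1' j)"
  have kernel: "gains d T x0 x1 U e + (\<Sum>j = 1..d. g j (e T j)) = 0" if "e \<in> Eset d T" for e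
  proof -
    have "gains d T x0 x1 U e + (\<Sum>j = 1..d. g j (e T j)) =
        LT d T x0 x1 u w0 w1 e - LT d T x0 x1 u' w0' w1' e"
      unfolding LT_eq_gains_plus_terminal_payoff[OF assms(1)] U_def g_def
        gains_diff[symmetric] terminal_payoff_diff[symmetric] sum_subtractf by simp
    then show ?thesis using assms(4)[OF that] by simp
  qed
  then have U: "\<forall>t \<in> {1..T-1}. \<forall>j \<in> {1..d}. \<forall>f \<in> Eset d t. U t j f = 0"
    and g: "\<forall>j \<in> {1..d}. g j 1 = g j 0"
    using vanishing_portfolio_is_trivial[of T d x0 x1 U g] assms(2,3) by auto
  have "gains d T x0 x1 U (\<lambda>_ _. 0) = 0"
    using U zero_in_Eset by (simp add: gains_def trunc_def)
  then have "(\<Sum>j = 1..d. g j 0) = 0"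
    using kernel[OF zero_in_Eset] by simp
  then have "w0 - w0' = 0" and "\<forall>j \<in> {1..d}. w1 j - w1' j = 0"
    using terminal_payoff_trivial_imp_zero[OF assms(1)] g unfolding g_def by blast+
  then show ?thesis
    using U by (simp add: U_def)
qed

end
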